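(* Let $q$ be a prime power, let $k\ge 3$ and $n=2k\le q$, and let $h=(k-1)+r$ with $1\le r\le k-2$. Let $\alpha_1,\dots,\alpha_n\in\mathbb{F}_q$ be pairwise distinct, let $G_{h,k}$ be the $k\times n$ matrix whose rows are $(\alpha_1^{e},\dots,\alpha_n^{e})$ for $e=0,1,\dots,k-2$ and $e=h$, and for $\mathbf v=(v_1,\dots,v_n)\in(\mathbb{F}_q^* )^n$ let $C_{h,\mathbf v}$ be the linear code generated by $G_{h,k}\cdot\mathrm{diag}(v_1,\dots,v_n)$. Let $u_i=\prod_{j\ne i}(\alpha_i-\alpha_j)^{-1}$ and $S_1=\alpha_1+\dots+\alpha_n$. Then there exists $\mathbf v\in(\mathbb{F}_q^* )^n$ such that $C_{h,\mathbf v}$ is self-dual if and only if $r=1$ and the following hold: (i) either all $u_i$ ($1\le i\le n$) are squares in $\mathbb{F}_q$, or all $u_i$ are non-squares in $\mathbb{F}_q$; (ii) $S_1=0$.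
   Context: Convention: $0^0=1$. A linear code $C$ is self-dual if $C=C^\perp$, where $C^\perp$ is the dual with respect to the Euclidean inner product. *)

theory Defs
  imports Main
begin

text \<open>Vectors of length n over a field are functions on nat, supported on {0..<n}
  (coordinates indexed 0..n-1). A k x n matrix is a function nat => nat => 'a.\<close>

definition row_space :: "nat \<Rightarrow> nat \<Rightarrow> (nat \<Rightarrow> nat \<Rightarrow> 'a::field) \<Rightarrow> (nat \<Rightarrow> 'a) set" where
  "row_space k n M = {x. \<exists>c::nat \<Rightarrow> 'a. x = (\<lambda>j. if j < n then (\<Sum>i<k. c i * M i j) else 0)}"

definition dual_code :: "nat \<Rightarrow> (nat \<Rightarrow> 'a::field) set \<Rightarrow> (nat \<Rightarrow> 'a) set" where
  "dual_code n C = {y. (\<forall>j\<ge>n. y j = 0) \<and> (\<forall>x\<in>C. (\<Sum>j<n. x j * y j) = 0)}"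

definition self_dual :: "nat \<Rightarrow> (nat \<Rightarrow> 'a::field) set \<Rightarrow> bool" where
  "self_dual n C \<longleftrightarrow> C = dual_code n C"

definition row_exp :: "nat \<Rightarrow> nat \<Rightarrow> nat \<Rightarrow> nat" where
  "row_exp k h i = (if i < k - 1 then i else h)"

definition G_hk :: "nat \<Rightarrow> nat \<Rightarrow> (nat \<Rightarrow> 'a::field) \<Rightarrow> nat \<Rightarrow> nat \<Rightarrow> 'a" where
  "G_hk h k alpha i j = alpha j ^ row_exp k h i"

definition C_hv :: "nat \<Rightarrow> nat \<Rightarrow> nat \<Rightarrow> (nat \<Rightarrow> 'a::field) \<Rightarrow> (nat \<Rightarrow> 'a) \<Rightarrow> (nat \<Rightarrow> 'a) set" where
  "C_hv n h k alpha v = row_space k n (\<lambda>i j. G_hk h k alpha i j * v j)"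

definition u_coef :: "nat \<Rightarrow> (nat \<Rightarrow> 'a::field) \<Rightarrow> nat \<Rightarrow> 'a" where
  "u_coef n alpha i = (\<Prod>j\<in>{..<n} - {i}. inverse (alpha i - alpha j))"

definition is_square :: "'a::field \<Rightarrow> bool" where
  "is_square x \<longleftrightarrow> (\<exists>y. x = y ^ 2)"

end

theory Submission
  imports Defs "HOL-Computational_Algebra.Polynomial"
begin

text \<open>A codeword of C_{h,v} has the form (v_j f(alpha_j))_j with f in the span of
  1, x, ..., x^{k-2}, x^h, so the code is self-orthogonal iff the weighted power sums
  sum_j v_j^2 alpha_j^m vanish for every m that is a sum of two exponents of G_{h,k}.
  Lagrange interpolation gives sum_j u_j f(alpha_j) = [x^{n-1}] f + S_1 [x^n] f for deg f <= n,
  and the vectors killing all power sums of degree <= n - 2 are exactly the multiples of u.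
  Since every m <= n - 2 is such an exponent sum, self-duality forces v_j^2 = lambda u_j with
  lambda /= 0; then the exponent sum n - 1 (available unless r = 1) and the sum 2h = n (when
  r = 1) force r = 1 and S_1 = 0. Conversely these conditions make the code self-orthogonal,
  and a vector of the dual, divided by v and interpolated, is a polynomial whose coefficients
  outside the exponents of G_{k,k} vanish, so it lies in the code. Finally, lambda u_j is a
  square for all j for some lambda /= 0 iff all u_j lie in one square class, because the
  product of two non-squares of a finite field is a square.\<close>

definition vanishing_poly :: "(nat \<Rightarrow> 'a::field) \<Rightarrow> nat set \<Rightarrow> 'a poly" where
  "vanishing_poly alpha A = (\<Prod>l\<in>A. [:- alpha l, 1:])"

lemma poly_vanishing_poly: "poly (vanishing_poly alpha A) x = (\<Prod>l\<in>A. x - alpha l)"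
  unfolding vanishing_poly_def poly_prod by simp

lemma degree_vanishing_poly: "finite A \<Longrightarrow> degree (vanishing_poly alpha A) = card A"
  unfolding vanishing_poly_def by (subst degree_prod_eq_sum_degree) auto

lemma coeff_vanishing_poly_card:
  assumes "finite A"
  shows "coeff (vanishing_poly alpha A) (card A) = 1"
proof -
  have "lead_coeff (vanishing_poly alpha A) = 1"
    unfolding vanishing_poly_def by (simp only: lead_coeff_prod) simp
  then show ?thesis using degree_vanishing_poly[OF assms] by metis
qed

lemma coeff_vanishing_poly_pred_card:
  "finite A \<Longrightarrow> card A = Suc m \<Longrightarrow> coeff (vanishing_poly alpha A) m = - (\<Sum>l\<in>A. alpha l)"
proof (induction A arbitrary: m rule: finite_induct)
  case empty
  then show ?case by simp
next
  case (insert x A)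
  then have card_A: "card A = m" by simp
  have split: "vanishing_poly alpha (insert x A) =
      smult (- alpha x) (vanishing_poly alpha A) + pCons 0 (vanishing_poly alpha A)"
    using insert by (simp add: vanishing_poly_def algebra_simps)
  show ?case
  proof (cases m)
    case 0
    with card_A insert show ?thesis by (simp add: vanishing_poly_def)
  next
    case (Suc m')
    have "coeff (vanishing_poly alpha A) m = 1"
      using coeff_vanishing_poly_card[OF insert(1)] card_A by simp
    with insert card_A Suc show ?thesis by (simp add: split)
  qed
qed

lemma u_coef_eq_inverse_prod: "u_coef n alpha i = inverse (\<Prod>j\<in>{..<n} - {i}. alpha i - alpha j)"
  unfolding u_coef_def using prod_inversef[of "\<lambda>j. alpha i - alpha j" "{..<n} - {i}"]
  by (simp add: o_def)

lemma u_coef_nonzero: "inj_on alpha {..<n} \<Longrightarrow> i < n \<Longrightarrow> u_coef n alpha i \<noteq> 0"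
  unfolding u_coef_eq_inverse_prod by (auto simp: inj_on_def)

definition lagrange_poly :: "nat \<Rightarrow> (nat \<Rightarrow> 'a::field) \<Rightarrow> (nat \<Rightarrow> 'a) \<Rightarrow> 'a poly" where
  "lagrange_poly n alpha z =
     (\<Sum>j<n. smult (z j * u_coef n alpha j) (vanishing_poly alpha ({..<n} - {j})))"

lemma poly_lagrange_poly:
  assumes "inj_on alpha {..<n}" and "l < n"
  shows "poly (lagrange_poly n alpha z) (alpha l) = z l"
proof -
  have basis: "poly (vanishing_poly alpha ({..<n} - {j})) (alpha l) =
      (if j = l then inverse (u_coef n alpha l) else 0)" if "j < n" for j
    using assms that unfolding poly_vanishing_poly u_coef_eq_inverse_prod
    by (auto intro: prod_zero)
  have "poly (lagrange_poly n alpha z) (alpha l) = z l * u_coef n alpha l * inverse (u_coef n alpha l)"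
    using assms(2) by (simp add: lagrange_poly_def poly_sum basis if_distrib[of "\<lambda>x. _ * x"] cong: if_cong)
  then show ?thesis using u_coef_nonzero[OF assms] by simp
qed

lemma degree_lagrange_poly: "degree (lagrange_poly n alpha z) \<le> n - 1"
  unfolding lagrange_poly_def
  by (intro degree_sum_le order.trans[OF degree_smult_le]) (auto simp: degree_vanishing_poly)

lemma coeff_lagrange_poly_top:
  "coeff (lagrange_poly n alpha z) (n - 1) = (\<Sum>j<n. z j * u_coef n alpha j)"
proof -
  have "coeff (vanishing_poly alpha ({..<n} - {j})) (n - 1) = 1" if "j < n" for j
    using that coeff_vanishing_poly_card[of "{..<n} - {j}" alpha] by simp
  then show ?thesis by (simp add: lagrange_poly_def coeff_sum)
qed

lemma sum_u_coef_poly: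
  assumes inj: "inj_on alpha {..<n}" and "0 < n" and "degree f \<le> n"
  shows "(\<Sum>j<n. u_coef n alpha j * poly f (alpha j)) =
    coeff f (n - 1) + coeff f n * (\<Sum>j<n. alpha j)"
proof -
  define V where "V = vanishing_poly alpha {..<n}"
  define L where "L = lagrange_poly n alpha (\<lambda>j. poly f (alpha j))"
  have degV: "degree V = n" unfolding V_def by (simp add: degree_vanishing_poly)
  have degL: "degree L \<le> n - 1" unfolding L_def by (rule degree_lagrange_poly)
  have "f = L + smult (coeff f n) V"
  proof (rule poly_eqI_degree_lead_coeff[where A = "alpha ` {..<n}"])
    show "coeff f n = coeff (L + smult (coeff f n) V) n"
      using degL \<open>0 < n\<close> coeff_vanishing_poly_card[of "{..<n}" alpha]
      by (simp add: V_def coeff_eq_0)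
    show "degree (L + smult (coeff f n) V) \<le> n"
      using degL degV by (intro degree_add_le) (auto intro: order.trans[OF degree_smult_le])
    show "poly f z = poly (L + smult (coeff f n) V) z" if "z \<in> alpha ` {..<n}" for z
      using that inj by (auto simp: L_def V_def poly_lagrange_poly poly_vanishing_poly)
  qed (use assms in \<open>auto simp: card_image\<close>)
  moreover have "coeff V (n - 1) = - (\<Sum>j<n. alpha j)"
    unfolding V_def using \<open>0 < n\<close> by (intro coeff_vanishing_poly_pred_card) auto
  ultimately have "coeff f (n - 1) = coeff L (n - 1) - coeff f n * (\<Sum>j<n. alpha j)"
    by (metis coeff_add coeff_smult diff_conv_add_uminus mult_minus_right)
  moreover have "coeff L (n - 1) = (\<Sum>j<n. u_coef n alpha j * poly f (alpha j))"
    unfolding L_def coeff_lagrange_poly_top by (simp add: mult.commute)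
  ultimately show ?thesis by simp
qed

lemma sum_u_coef_power:
  assumes "inj_on alpha {..<n}" and "0 < n" and "m \<le> n"
  shows "(\<Sum>j<n. u_coef n alpha j * alpha j ^ m) =
    (if m = n - 1 then 1 else if m = n then (\<Sum>j<n. alpha j) else 0)"
  using sum_u_coef_poly[OF assms(1,2), of "monom 1 m"] assms(2,3)
  by (auto simp: poly_monom coeff_monom degree_monom_eq)

lemma sum_weighted_poly:
  fixes f :: "'a::comm_semiring_1 poly"
  assumes "degree f \<le> d"
  shows "(\<Sum>j<n. w j * poly f (x j)) = (\<Sum>m\<le>d. coeff f m * (\<Sum>j<n. w j * x j ^ m))"
proof -
  have "poly f y = (\<Sum>m\<le>d. coeff f m * y ^ m)" for y
  proof -
    have "poly f y = (\<Sum>m\<le>degree f. coeff f m * y ^ m)" by (rule poly_altdef)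
    also have "\<dots> = (\<Sum>m\<le>d. coeff f m * y ^ m)"
      using assms by (intro sum.mono_neutral_left) (auto simp: coeff_eq_0)
    finally show ?thesis .
  qed
  then show ?thesis
    by (simp add: sum_distrib_left sum_distrib_right mult_ac sum.swap[of _ "{..<n}"])
qed

text \<open>Test w against the polynomial vanishing at all nodes except a and b.\<close>
lemma vanishing_moments_cross_eq:
  assumes inj: "inj_on alpha {..<n}"
    and moments: "\<And>m. m \<le> n - 2 \<Longrightarrow> (\<Sum>j<n. w j * alpha j ^ m) = 0"
    and "a < n" and "b < n" and "a \<noteq> b"
  shows "w a * u_coef n alpha b = w b * u_coef n alpha a"
proof -
  define f where "f = vanishing_poly alpha ({..<n} - {a, b})"
  have deg: "degree f = n - 2"
    unfolding f_def using assms by (simp add: degree_vanishing_poly card_Diff_subset)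
  have fa: "poly f (alpha a) \<noteq> 0" and fb: "poly f (alpha b) \<noteq> 0"
    unfolding f_def poly_vanishing_poly using assms by (auto simp: inj_on_def)
  have two_nodes: "(\<Sum>j<n. x j * poly f (alpha j)) = x a * poly f (alpha a) + x b * poly f (alpha b)"
    for x
  proof -
    have "(\<Sum>j<n. x j * poly f (alpha j)) = (\<Sum>j\<in>{a, b}. x j * poly f (alpha j))"
      using assms by (intro sum.mono_neutral_right) (auto simp: f_def poly_vanishing_poly)
    then show ?thesis using assms by simp
  qed
  have "w a * poly f (alpha a) = - (w b * poly f (alpha b))"
    using sum_weighted_poly[of f "n - 2" w alpha n] deg moments
    by (simp add: two_nodes eq_neg_iff_add_eq_0)
  moreover have "u_coef n alpha b * poly f (alpha b) = - (u_coef n alpha a * poly f (alpha a))"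
    using sum_u_coef_poly[OF inj _, of f] deg assms
    by (simp add: two_nodes coeff_eq_0 eq_neg_iff_add_eq_0 add.commute)
  ultimately have "(w a * poly f (alpha a)) * (u_coef n alpha b * poly f (alpha b)) =
      (w b * poly f (alpha b)) * (u_coef n alpha a * poly f (alpha a))"
    by simp
  then have "(w a * u_coef n alpha b) * (poly f (alpha a) * poly f (alpha b)) =
      (w b * u_coef n alpha a) * (poly f (alpha a) * poly f (alpha b))"
    by (simp add: mult_ac)
  then show ?thesis using fa fb by simp
qed

lemma vanishing_moments_imp_multiple_of_u_coef:
  assumes inj: "inj_on alpha {..<n}" and "0 < n"
    and moments: "\<And>m. m \<le> n - 2 \<Longrightarrow> (\<Sum>j<n. w j * alpha j ^ m) = 0"
  obtains c where "\<And>j. j < n \<Longrightarrow> w j = c * u_coef n alpha j"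
proof (rule that[of "w 0 / u_coef n alpha 0"])
  fix j assume "j < n"
  then have "w j * u_coef n alpha 0 = w 0 * u_coef n alpha j"
    using vanishing_moments_cross_eq[OF inj moments, of j 0] \<open>0 < n\<close> by (cases "j = 0") auto
  then show "w j = w 0 / u_coef n alpha 0 * u_coef n alpha j"
    using u_coef_nonzero[OF inj \<open>0 < n\<close>] by (simp add: field_simps)
qed

lemma degree_le_of_vanishing_u_moments:
  assumes inj: "inj_on alpha {..<n}" and deg: "degree g < n"
    and moments: "\<And>e. e < m \<Longrightarrow> (\<Sum>j<n. u_coef n alpha j * alpha j ^ e * poly g (alpha j)) = 0"
  shows "degree g \<le> n - 1 - m"
  using moments
proof (induction m)
  case 0
  then show ?case using deg by simp
next
  case (Suc m)
  then have IH: "degree g \<le> n - 1 - m" by simp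
  show ?case
  proof (cases "Suc m < n")
    case False
    then show ?thesis using IH by simp
  next
    case True
    define f where "f = monom 1 m * g"
    have "degree f \<le> n - 1"
      unfolding f_def using IH True
      by (intro order.trans[OF degree_mult_le]) (simp add: degree_monom_eq)
    then have "coeff f (n - 1) = (\<Sum>j<n. u_coef n alpha j * alpha j ^ m * poly g (alpha j))"
      using sum_u_coef_poly[OF inj, of f] True
      by (simp add: f_def poly_monom coeff_eq_0 mult.assoc)
    also have "\<dots> = 0" using Suc.prems by simp
    also have "coeff f (n - 1) = coeff g (n - 1 - m)"
      using True by (simp add: f_def coeff_monom_mult)
    finally have "coeff g (n - 1 - m) = 0" by simp
    then have "degree g \<noteq> n - 1 - m \<or> g = 0" by (metis leading_coeff_0_iff)
    then show ?thesis using IH by auto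
  qed
qed

lemma is_square_divide: "is_square a \<Longrightarrow> is_square b \<Longrightarrow> is_square (a / b)"
  unfolding is_square_def by (metis power_divide)

lemma card_nonzero_le_twice_card_nonzero_squares:
  "card (UNIV - {0 :: 'a::{finite,field}}) \<le> 2 * card ((\<lambda>x. x ^ 2) ` (UNIV - {0 :: 'a}))"
proof -
  let ?Q = "(\<lambda>x::'a. x ^ 2) ` (UNIV - {0})"
  have fibre: "card {x. x ^ 2 = y ^ 2} \<le> 2" for y :: 'a
  proof -
    have "{x. x ^ 2 = y ^ 2} \<subseteq> {y, -y}"
      by (auto simp: power2_eq_iff)
    then have "card {x. x ^ 2 = y ^ 2} \<le> card {y, -y}" by (intro card_mono) auto
    also have "\<dots> \<le> 2" by (simp add: card_insert_le_m1)
    finally show ?thesis .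
  qed
  have "card (UNIV - {0 :: 'a}) \<le> card (\<Union>q\<in>?Q. {x. x ^ 2 = q})"
    by (intro card_mono) auto
  also have "\<dots> \<le> (\<Sum>q\<in>?Q. card {x. x ^ 2 = q})" by (rule card_UN_le) simp
  also have "\<dots> \<le> (\<Sum>q\<in>?Q. 2)" using fibre by (intro sum_mono) auto
  finally show ?thesis by simp
qed

text \<open>The nonzero squares have index at most two in the multiplicative group, so together
  with the coset of a non-square a they exhaust it.\<close>
lemma not_square_mult_not_square:
  fixes a b :: "'a::{finite,field}"
  assumes a: "\<not> is_square a" and b: "\<not> is_square b"
  shows "is_square (a * b)"
proof -
  define U where "U = (UNIV :: 'a set) - {0}"
  define Q where "Q = (\<lambda>x. x ^ 2) ` U"
  have "a \<noteq> 0" "b \<noteq> 0" using a b unfolding is_square_def by (metis zero_power2)+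
  have disjoint: "Q \<inter> (\<lambda>x. a * x) ` Q = {}"
  proof (rule ccontr)
    assume "Q \<inter> (\<lambda>x. a * x) ` Q \<noteq> {}"
    then obtain s t where "t \<noteq> 0" "s ^ 2 = a * t ^ 2" unfolding Q_def U_def by auto
    then have "a = (s / t) ^ 2" by (simp add: field_simps)
    with a show False unfolding is_square_def by blast
  qed
  have "card ((\<lambda>x. a * x) ` Q) = card Q"
    using \<open>a \<noteq> 0\<close> by (intro card_image) (auto simp: inj_on_def)
  then have "card U \<le> card (Q \<union> (\<lambda>x. a * x) ` Q)"
    using card_nonzero_le_twice_card_nonzero_squares[where 'a = 'a] disjoint
    by (simp add: U_def Q_def card_Un_disjoint)
  moreover have "Q \<union> (\<lambda>x. a * x) ` Q \<subseteq> U"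
    using \<open>a \<noteq> 0\<close> unfolding Q_def U_def by auto
  ultimately have "Q \<union> (\<lambda>x. a * x) ` Q = U" by (intro card_seteq) (auto simp: U_def)
  moreover have "b \<in> U - Q" using b \<open>b \<noteq> 0\<close> unfolding U_def Q_def is_square_def by auto
  ultimately obtain s where "b = a * s ^ 2" unfolding Q_def by auto
  then have "a * b = (a * s) ^ 2" by (simp add: power2_eq_square)
  then show ?thesis unfolding is_square_def by blast
qed

lemma uniform_square_class_iff:
  fixes u :: "'b \<Rightarrow> 'a::{finite,field}"
  assumes nonzero: "\<And>i. i \<in> I \<Longrightarrow> u i \<noteq> 0"
  shows "((\<forall>i\<in>I. is_square (u i)) \<or> (\<forall>i\<in>I. \<not> is_square (u i))) \<longleftrightarrow>
    (\<exists>c. c \<noteq> 0 \<and> (\<forall>i\<in>I. is_square (c * u i)))"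
proof
  assume "(\<forall>i\<in>I. is_square (u i)) \<or> (\<forall>i\<in>I. \<not> is_square (u i))"
  then show "\<exists>c. c \<noteq> 0 \<and> (\<forall>i\<in>I. is_square (c * u i))"
  proof
    assume "\<forall>i\<in>I. is_square (u i)"
    then show ?thesis by (intro exI[of _ 1]) simp
  next
    assume non_squares: "\<forall>i\<in>I. \<not> is_square (u i)"
    show ?thesis
    proof (cases "I = {}")
      case False
      then obtain i0 where "i0 \<in> I" by blast
      then show ?thesis using nonzero non_squares
        by (intro exI[of _ "u i0"]) (auto intro: not_square_mult_not_square)
    qed (intro exI[of _ 1], simp)
  qed
next
  assume "\<exists>c. c \<noteq> 0 \<and> (\<forall>i\<in>I. is_square (c * u i))"
  then obtain c where "c \<noteq> 0" and squares: "\<And>i. i \<in> I \<Longrightarrow> is_square (c * u i)" by blast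
  show "(\<forall>i\<in>I. is_square (u i)) \<or> (\<forall>i\<in>I. \<not> is_square (u i))"
  proof (cases "is_square c")
    case True
    then have "is_square (c * u i / c)" if "i \<in> I" for i
      using squares[OF that] by (intro is_square_divide)
    then show ?thesis using \<open>c \<noteq> 0\<close> by simp
  next
    case False
    have "\<not> is_square (u i)" if "i \<in> I" for i
    proof
      assume "is_square (u i)"
      then have "is_square (c * u i / u i)" using squares[OF that] by (intro is_square_divide)
      with False nonzero[OF that] show False by simp
    qed
    then show ?thesis by blast
  qed
qed

lemma row_in_row_space: "i < k \<Longrightarrow> (\<lambda>j. if j < n then M i j else 0) \<in> row_space k n M"
  unfolding row_space_def
  by (intro CollectI exI[of _ "\<lambda>i'. if i' = i then 1 else 0"] ext)
     (simp add: if_distrib[of "\<lambda>x. x * _"] cong: if_cong)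

lemma orthogonal_row_space:
  assumes "\<And>i. i < k \<Longrightarrow> (\<Sum>j<n. M i j * y j) = 0" and "x \<in> row_space k n M"
  shows "(\<Sum>j<n. x j * y j) = 0"
proof -
  obtain c where x: "x = (\<lambda>j. if j < n then (\<Sum>i<k. c i * M i j) else 0)"
    using assms(2) unfolding row_space_def by blast
  have "(\<Sum>j<n. x j * y j) = (\<Sum>i<k. c i * (\<Sum>j<n. M i j * y j))"
    by (simp add: x sum_distrib_left sum_distrib_right mult.assoc sum.swap[of _ "{..<n}"])
  then show ?thesis using assms(1) by simp
qed

lemma mem_dual_code_row_space_iff:
  "y \<in> dual_code n (row_space k n M) \<longleftrightarrow>
    (\<forall>j\<ge>n. y j = 0) \<and> (\<forall>i<k. (\<Sum>j<n. M i j * y j) = 0)"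
proof
  assume y: "y \<in> dual_code n (row_space k n M)"
  have "(\<Sum>j<n. M i j * y j) = 0" if "i < k" for i
    using y row_in_row_space[OF that, of n M] unfolding dual_code_def by auto
  then show "(\<forall>j\<ge>n. y j = 0) \<and> (\<forall>i<k. (\<Sum>j<n. M i j * y j) = 0)"
    using y unfolding dual_code_def by auto
qed (auto simp: dual_code_def intro: orthogonal_row_space)

lemma row_space_subset_dual_code_iff:
  "row_space k n M \<subseteq> dual_code n (row_space k n M) \<longleftrightarrow>
    (\<forall>i<k. \<forall>i'<k. (\<Sum>j<n. M i j * M i' j) = 0)"
proof
  assume "row_space k n M \<subseteq> dual_code n (row_space k n M)"
  then have "(\<Sum>j<n. M i j * (if j < n then M i' j else 0)) = 0" if "i < k" "i' < k" for i i'
    using row_in_row_space[OF that(2), of n M] that(1) by (auto simp: mem_dual_code_row_space_iff)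
  then show "\<forall>i<k. \<forall>i'<k. (\<Sum>j<n. M i j * M i' j) = 0" by simp
next
  assume gram: "\<forall>i<k. \<forall>i'<k. (\<Sum>j<n. M i j * M i' j) = 0"
  show "row_space k n M \<subseteq> dual_code n (row_space k n M)"
  proof
    fix x assume x: "x \<in> row_space k n M"
    have "(\<Sum>j<n. M i j * x j) = 0" if "i < k" for i
    proof -
      have "(\<Sum>j<n. x j * M i j) = 0"
        using gram that by (intro orthogonal_row_space[OF _ x]) auto
      then show ?thesis by (simp add: mult.commute)
    qed
    moreover have "\<forall>j\<ge>n. x j = 0" using x unfolding row_space_def by auto
    ultimately show "x \<in> dual_code n (row_space k n M)"
      by (simp add: mem_dual_code_row_space_iff)
  qed
qed

lemma C_hv_eq_row_space:
  "C_hv n h k alpha v = row_space k n (\<lambda>i j. alpha j ^ row_exp k h i * v j)"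
  unfolding C_hv_def G_hk_def ..

lemma C_hv_subset_dual_code_iff:
  "C_hv n h k alpha v \<subseteq> dual_code n (C_hv n h k alpha v) \<longleftrightarrow>
    (\<forall>i<k. \<forall>i'<k. (\<Sum>j<n. v j ^ 2 * alpha j ^ (row_exp k h i + row_exp k h i')) = 0)"
  unfolding C_hv_eq_row_space row_space_subset_dual_code_iff
  by (simp add: power_add power2_eq_square mult_ac)

lemma row_exp_sum_cover:
  assumes "k \<le> h" and "h + 3 \<le> 2 * k" and "m \<le> 2 * k - 2"
  obtains i i' where "i < k" and "i' < k" and "row_exp k h i + row_exp k h i' = m"
proof (cases "m \<le> 2 * k - 4")
  case True
  define i where "i = min m (k - 2)"
  have "i < k - 1" "m - i < k - 1" "i \<le> m" using True assms unfolding i_def min_def by auto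
  then show ?thesis using that[of i "m - i"] by (simp add: row_exp_def)
next
  case False
  have "m - h < k - 1" "h \<le> m" using False assms by auto
  then show ?thesis using that[of "k - 1" "m - h"] by (simp add: row_exp_def)
qed

lemma poly_eq_sum_row_exp:
  fixes g :: "'a::comm_semiring_1 poly"
  assumes "0 < k" and "k - 1 \<le> h" and "degree g \<le> h"
    and gap: "\<And>m. k - 1 \<le> m \<Longrightarrow> m < h \<Longrightarrow> coeff g m = 0"
  shows "poly g x = (\<Sum>i<k. coeff g (row_exp k h i) * x ^ row_exp k h i)"
proof -
  have "poly g x = (\<Sum>m\<le>degree g. coeff g m * x ^ m)" by (rule poly_altdef)
  also have "\<dots> = (\<Sum>m\<le>h. coeff g m * x ^ m)"
    using assms by (intro sum.mono_neutral_left) (auto simp: coeff_eq_0)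
  also have "\<dots> = (\<Sum>m\<in>{..<k - 1} \<union> {h}. coeff g m * x ^ m)"
    using assms by (intro sum.mono_neutral_right) (auto simp: not_less)
  also have "\<dots> = (\<Sum>i<k. coeff g (row_exp k h i) * x ^ row_exp k h i)"
    using assms(1,2) by (cases k) (auto simp: sum.lessThan_Suc row_exp_def add.commute)
  finally show ?thesis .
qed

lemma self_dual_C_hvD:
  fixes alpha v :: "nat \<Rightarrow> 'a::field"
  assumes n: "n = 2 * k" and h: "h = k - 1 + r" and "1 \<le> r" and "r \<le> k - 2"
    and inj: "inj_on alpha {..<n}" and v: "\<forall>j<n. v j \<noteq> 0"
    and self_dual: "self_dual n (C_hv n h k alpha v)"
  shows "r = 1 \<and> (\<Sum>j<n. alpha j) = 0 \<and> (\<exists>c. c \<noteq> 0 \<and> (\<forall>j<n. v j ^ 2 = c * u_coef n alpha j))"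
proof -
  let ?E = "row_exp k h"
  have "0 < n" using assms by simp
  have "C_hv n h k alpha v \<subseteq> dual_code n (C_hv n h k alpha v)"
    using self_dual unfolding self_dual_def by simp
  then have gram: "(\<Sum>j<n. v j ^ 2 * alpha j ^ (?E i + ?E i')) = 0" if "i < k" "i' < k" for i i'
    using that unfolding C_hv_subset_dual_code_iff by blast
  have low_moments: "(\<Sum>j<n. v j ^ 2 * alpha j ^ m) = 0" if "m \<le> n - 2" for m
  proof -
    have "k \<le> h" "h + 3 \<le> 2 * k" "m \<le> 2 * k - 2" using assms that by auto
    then obtain i i' where "i < k" "i' < k" "?E i + ?E i' = m" by (rule row_exp_sum_cover)
    then show ?thesis using gram by blast
  qed
  obtain c where c: "\<And>j. j < n \<Longrightarrow> v j ^ 2 = c * u_coef n alpha j"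
    using vanishing_moments_imp_multiple_of_u_coef[OF inj \<open>0 < n\<close> low_moments] by blast
  have "c \<noteq> 0" using c[OF \<open>0 < n\<close>] v \<open>0 < n\<close> by auto
  have moments: "(\<Sum>j<n. v j ^ 2 * alpha j ^ m) =
      c * (if m = n - 1 then 1 else if m = n then (\<Sum>j<n. alpha j) else 0)" if "m \<le> n" for m
  proof -
    have "(\<Sum>j<n. v j ^ 2 * alpha j ^ m) = c * (\<Sum>j<n. u_coef n alpha j * alpha j ^ m)"
      unfolding sum_distrib_left by (intro sum.cong) (simp_all add: c mult.assoc)
    then show ?thesis using sum_u_coef_power[OF inj \<open>0 < n\<close> that] by simp
  qed
  have "r = 1"
  proof (rule ccontr)
    assume "r \<noteq> 1"
    then have "?E (k - 1) + ?E (k - r) = n - 1" using assms by (auto simp: row_exp_def)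
    then show False
      using gram[of "k - 1" "k - r"] moments[of "n - 1"] \<open>c \<noteq> 0\<close> assms by simp
  qed
  moreover have "(\<Sum>j<n. alpha j) = 0"
  proof -
    have "?E (k - 1) + ?E (k - 1) = n" "k - 1 < k" using assms \<open>r = 1\<close> by (auto simp: row_exp_def)
    then show ?thesis
      using gram[of "k - 1" "k - 1"] moments[of n] \<open>c \<noteq> 0\<close> \<open>0 < n\<close> by (auto split: if_split_asm)
  qed
  ultimately show ?thesis using c \<open>c \<noteq> 0\<close> by blast
qed

text \<open>The first k - 1 moments give deg g <= k; the last one, together with S_1 = 0, kills the
  coefficient of x^{k-1}.\<close>
lemma vanishing_u_moments_imp_poly_eq_sum_row_exp:
  assumes "0 < k" and n: "n = 2 * k" and inj: "inj_on alpha {..<n}"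
    and S: "(\<Sum>j<n. alpha j) = 0" and "degree g < n"
    and moments: "\<And>i. i < k \<Longrightarrow>
      (\<Sum>j<n. u_coef n alpha j * alpha j ^ row_exp k k i * poly g (alpha j)) = 0"
  shows "poly g x = (\<Sum>i<k. coeff g (row_exp k k i) * x ^ row_exp k k i)"
proof -
  have "0 < n" using assms by simp
  have "degree g \<le> n - 1 - (k - 1)"
  proof (rule degree_le_of_vanishing_u_moments[OF inj \<open>degree g < n\<close>])
    show "(\<Sum>j<n. u_coef n alpha j * alpha j ^ e * poly g (alpha j)) = 0" if "e < k - 1" for e
      using moments[of e] that by (simp add: row_exp_def)
  qed
  then have deg: "degree g \<le> k" using n by simp
  then have "degree (monom 1 k * g) \<le> n"
    using n by (intro order.trans[OF degree_mult_le]) (simp add: degree_monom_eq)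
  have "coeff g (k - 1) =
      coeff (monom 1 k * g) (n - 1) + coeff (monom 1 k * g) n * (\<Sum>j<n. alpha j)"
    using S n \<open>0 < k\<close> by (simp add: coeff_monom_mult)
  also have "\<dots> = (\<Sum>j<n. u_coef n alpha j * poly (monom 1 k * g) (alpha j))"
    by (rule sum_u_coef_poly[symmetric, OF inj \<open>0 < n\<close> \<open>degree (monom 1 k * g) \<le> n\<close>])
  also have "\<dots> = (\<Sum>j<n. u_coef n alpha j * alpha j ^ row_exp k k (k - 1) * poly g (alpha j))"
    using \<open>0 < k\<close> by (simp add: row_exp_def poly_monom mult.assoc)
  also have "\<dots> = 0" using \<open>0 < k\<close> by (intro moments) simp
  finally show ?thesis
    using deg \<open>0 < k\<close> by (intro poly_eq_sum_row_exp) (auto simp: le_less)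
qed

lemma dual_code_C_hv_subset:
  fixes alpha v :: "nat \<Rightarrow> 'a::field"
  assumes "0 < k" and n: "n = 2 * k" and inj: "inj_on alpha {..<n}"
    and S: "(\<Sum>j<n. alpha j) = 0"
    and "c \<noteq> 0" and c: "\<And>j. j < n \<Longrightarrow> v j ^ 2 = c * u_coef n alpha j"
  shows "dual_code n (C_hv n k k alpha v) \<subseteq> C_hv n k k alpha v"
proof
  let ?E = "row_exp k k"
  fix y assume "y \<in> dual_code n (C_hv n k k alpha v)"
  then have y0: "\<forall>j\<ge>n. y j = 0" and orth: "\<And>i. i < k \<Longrightarrow> (\<Sum>j<n. alpha j ^ ?E i * v j * y j) = 0"
    unfolding C_hv_eq_row_space mem_dual_code_row_space_iff by auto
  have "0 < n" using assms by simp
  have v: "v j \<noteq> 0" if "j < n" for j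
    using c[OF that] \<open>c \<noteq> 0\<close> u_coef_nonzero[OF inj that] by auto
  define g where "g = lagrange_poly n alpha (\<lambda>j. y j / v j)"
  have y: "y j = v j * poly g (alpha j)" if "j < n" for j
    using v[OF that] by (simp add: g_def poly_lagrange_poly[OF inj that])
  have "degree g < n" using degree_lagrange_poly[of n alpha] \<open>0 < n\<close> unfolding g_def
    by (meson diff_less le_less_trans zero_less_one)
  moreover have "(\<Sum>j<n. u_coef n alpha j * alpha j ^ ?E i * poly g (alpha j)) = 0" if "i < k" for i
  proof -
    have "c * (\<Sum>j<n. u_coef n alpha j * alpha j ^ ?E i * poly g (alpha j)) =
        (\<Sum>j<n. alpha j ^ ?E i * v j * y j)"
      by (auto simp: sum_distrib_left y c[symmetric] power2_eq_square mult_ac intro: sum.cong)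
    then show ?thesis using orth[OF that] \<open>c \<noteq> 0\<close> by simp
  qed
  ultimately have "poly g x = (\<Sum>i<k. coeff g (?E i) * x ^ ?E i)" for x
    by (rule vanishing_u_moments_imp_poly_eq_sum_row_exp[OF assms(1-4)])
  then have "y = (\<lambda>j. if j < n then (\<Sum>i<k. coeff g (?E i) * (alpha j ^ ?E i * v j)) else 0)"
    using y y0 by (auto simp: sum_distrib_left mult_ac)
  then show "y \<in> C_hv n k k alpha v"
    unfolding C_hv_eq_row_space row_space_def mem_Collect_eq by (rule exI[where x = "\<lambda>i. coeff g (?E i)"])
qed

lemma self_dual_C_hvI:
  fixes alpha v :: "nat \<Rightarrow> 'a::field"
  assumes "0 < k" and n: "n = 2 * k" and inj: "inj_on alpha {..<n}"
    and S: "(\<Sum>j<n. alpha j) = 0"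
    and "c \<noteq> 0" and c: "\<And>j. j < n \<Longrightarrow> v j ^ 2 = c * u_coef n alpha j"
  shows "self_dual n (C_hv n k k alpha v)"
proof -
  have "0 < n" using assms by simp
  have "(\<Sum>j<n. v j ^ 2 * alpha j ^ (row_exp k k i + row_exp k k i')) = 0"
    if "i < k" "i' < k" for i i'
  proof -
    let ?m = "row_exp k k i + row_exp k k i'"
    have range: "?m \<le> n" "?m \<noteq> n - 1" using that n by (auto simp: row_exp_def)
    have "(\<Sum>j<n. v j ^ 2 * alpha j ^ ?m) = c * (\<Sum>j<n. u_coef n alpha j * alpha j ^ ?m)"
      unfolding sum_distrib_left by (intro sum.cong) (simp_all add: c mult.assoc)
    then show ?thesis using sum_u_coef_power[OF inj \<open>0 < n\<close> range(1)] range(2) S by simp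
  qed
  then have "C_hv n k k alpha v \<subseteq> dual_code n (C_hv n k k alpha v)"
    by (simp add: C_hv_subset_dual_code_iff)
  with dual_code_C_hv_subset[OF assms] show ?thesis unfolding self_dual_def by blast
qed

lemma exists_self_dual_C_hv:
  fixes alpha :: "nat \<Rightarrow> 'a::field"
  assumes "0 < k" and "n = 2 * k" and inj: "inj_on alpha {..<n}"
    and "(\<Sum>j<n. alpha j) = 0"
    and "c \<noteq> 0" and squares: "\<forall>j<n. is_square (c * u_coef n alpha j)"
  shows "\<exists>v. (\<forall>j<n. v j \<noteq> 0) \<and> self_dual n (C_hv n k k alpha v)"
proof -
  obtain v where v: "\<And>j. j < n \<Longrightarrow> v j ^ 2 = c * u_coef n alpha j"
    using squares unfolding is_square_def by metis
  then have "\<forall>j<n. v j \<noteq> 0" using \<open>c \<noteq> 0\<close> u_coef_nonzero[OF inj] by fastforce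
  with self_dual_C_hvI[OF assms(1-5) v] show ?thesis by blast
qed

theorem theorem4p14:
  fixes alpha :: "nat \<Rightarrow> 'a::{finite,field}" and k n h r :: nat
  assumes "k \<ge> 3" and "n = 2 * k" and "n \<le> card (UNIV :: 'a set)"
    and "h = (k - 1) + r" and "1 \<le> r" and "r \<le> k - 2"
    and "inj_on alpha {..<n}"
  shows "(\<exists>v::nat \<Rightarrow> 'a. (\<forall>i<n. v i \<noteq> 0) \<and> self_dual n (C_hv n h k alpha v))
     \<longleftrightarrow> (r = 1 \<and>
          ((\<forall>i<n. is_square (u_coef n alpha i)) \<or> (\<forall>i<n. \<not> is_square (u_coef n alpha i))) \<and>
          (\<Sum>i<n. alpha i) = 0)"
proof -
  \<comment> \<open>The bound \<open>n \<le> q\<close> only ensures that distinct nodes exist.\<close>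
  have square_class: "((\<forall>i<n. is_square (u_coef n alpha i)) \<or> (\<forall>i<n. \<not> is_square (u_coef n alpha i)))
      \<longleftrightarrow> (\<exists>c. c \<noteq> 0 \<and> (\<forall>i<n. is_square (c * u_coef n alpha i)))"
    using uniform_square_class_iff[of "{..<n}" "u_coef n alpha"] u_coef_nonzero[OF assms(7)] by auto
  show ?thesis
  proof
    assume "\<exists>v. (\<forall>i<n. v i \<noteq> 0) \<and> self_dual n (C_hv n h k alpha v)"
    then obtain v c where "r = 1" and "(\<Sum>i<n. alpha i) = 0" and "c \<noteq> 0"
      and c: "\<forall>i<n. v i ^ 2 = c * u_coef n alpha i"
      using self_dual_C_hvD[OF assms(2,4-7)] by blast
    moreover have "\<forall>i<n. is_square (c * u_coef n alpha i)"
      using c unfolding is_square_def by metis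
    ultimately show "r = 1 \<and> ((\<forall>i<n. is_square (u_coef n alpha i)) \<or> (\<forall>i<n. \<not> is_square (u_coef n alpha i)))
        \<and> (\<Sum>i<n. alpha i) = 0"
      using square_class by blast
  next
    assume rhs: "r = 1 \<and> ((\<forall>i<n. is_square (u_coef n alpha i)) \<or> (\<forall>i<n. \<not> is_square (u_coef n alpha i)))
        \<and> (\<Sum>i<n. alpha i) = 0"
    then obtain c where "c \<noteq> 0" and "\<forall>i<n. is_square (c * u_coef n alpha i)"
      using square_class by blast
    moreover have "h = k" using rhs assms(1,4) by simp
    ultimately show "\<exists>v. (\<forall>i<n. v i \<noteq> 0) \<and> self_dual n (C_hv n h k alpha v)"
      using exists_self_dual_C_hv[OF _ assms(2,7)] rhs assms(1) by simp
  qed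
qed

end
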